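(* Let $a_1,\dots,a_n\in S^d$, and run Algorithm 2.9 (described in the context). Then $\mathrm{def}\,Q_k\le t^{-1}$ after at most $t^2$ steps. That is, for every real $t\ge1$ and every index $k\ge t^2$ for which $Q_k$ is produced, $\mathrm{def}\,Q_k\le 1/t$.
   Context: $S^d$ is the unit sphere in $\mathbb{R}^{d+1}$ and $O$ is the origin. An index $m$ is a most violated constraint for $x\in S^d$ if $a_m^Tx=\min_j a_j^Tx$. A finite set $Q$ is positively spanning if it is affinely independent and $O\in\mathrm{conv}\,Q$. For affinely independent $Q$ whose projection $O'$ of $O$ onto $\mathrm{aff}\,Q$ lies in $\mathrm{conv}\,Q$, $\mathrm{def}\,Q=\|O'\|$. The touching sphere of an affinely independent $Q$ is the unique sphere $\{z:\|z-C\|=R\}$ with $C\in\mathrm{aff}\,Q$ containing $Q$. Algorithm 2.9: (1) Choose any $j$ and set $k=1$, $x^1=a_j$, $Q_1=\{a_j\}$. (2) If $a_i^Tx^k\ge0$ for all $i$, stop. Otherwise let $m$ be a most violated constraint for $x^k/\|x^k\|$, and let $y$ be the point on the line through $x^k$ and $a_m$ closest to the origin. (3) If $Q_k\cup\{a_m\}$ is positively spanning, stop. (4) Compute the center $C$ of the touching sphere of $Q_k\cup\{a_m\}$. (5) If $C\in\mathrm{conv}(Q_k\cup\{a_m\})$, set $x^{k+1}=C$, $Q_{k+1}=Q_k\cup\{a_m\}$ and $k:=k+1$, then go to (2). (6) Otherwise, let $y$ be the point where $\overline{yC}$ meets the relative boundary of $\mathrm{conv}(Q_k\cup\{a_m\})$.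 Let $F$ be a facet containing $y$, and let $a_j$ be the vertex of $Q_k$ not in $F$. Set $Q_k:=Q_k\setminus\{a_j\}$ and go to (4). *)

theory Defs
  imports "HOL-Analysis.Analysis"
begin

text \<open>Points live in a Euclidean space of dimension d+1 (= DIM('a)); the unit sphere
  S^d is sphere 0 1.  The origin O is 0.\<close>

definition most_violated :: "(nat \<Rightarrow> 'a::euclidean_space) \<Rightarrow> nat set \<Rightarrow> 'a \<Rightarrow> nat \<Rightarrow> bool" where
  "most_violated a I x m \<longleftrightarrow> m \<in> I \<and> a m \<bullet> x = Min ((\<lambda>j. a j \<bullet> x) ` I)"

definition pos_spanning :: "'a::euclidean_space set \<Rightarrow> bool" where
  "pos_spanning Q \<longleftrightarrow> \<not> affine_dependent Q \<and> 0 \<in> convex hull Q"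

definition proj0 :: "'a::euclidean_space set \<Rightarrow> 'a" where
  "proj0 Q = (THE p. p \<in> affine hull Q \<and> (\<forall>z\<in>affine hull Q. norm p \<le> norm z))"

definition deficiency :: "'a::euclidean_space set \<Rightarrow> real" where
  "deficiency Q = norm (proj0 Q)"

definition tcenter :: "'a::euclidean_space set \<Rightarrow> 'a" where
  "tcenter Q = (THE C. C \<in> affine hull Q \<and> (\<exists>R. \<forall>q\<in>Q. dist q C = R))"

text \<open>Inner loop of steps (4)--(6), for fixed a_m: starting from the current Q_k and
  the current point y, eventually step (5) produces x^{k+1} and Q_{k+1}.\<close>
inductive inner_loop :: "'a::euclidean_space \<Rightarrow> 'a set \<Rightarrow> 'a \<Rightarrow> 'a \<Rightarrow> 'a set \<Rightarrow> bool"
  for am :: 'a where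
  accept: "tcenter (insert am Q) \<in> convex hull (insert am Q) \<Longrightarrow>
           inner_loop am Q y (tcenter (insert am Q)) (insert am Q)"
| drop: "tcenter (insert am Q) \<notin> convex hull (insert am Q) \<Longrightarrow>
         y' \<in> closed_segment y (tcenter (insert am Q)) \<Longrightarrow>
         y' \<in> rel_frontier (convex hull (insert am Q)) \<Longrightarrow>
         F facet_of (convex hull (insert am Q)) \<Longrightarrow> y' \<in> F \<Longrightarrow>
         aj \<in> Q \<Longrightarrow> aj \<notin> F \<Longrightarrow>
         inner_loop am (Q - {aj}) y' x' Q' \<Longrightarrow>
         inner_loop am Q y x' Q'"

definition outer_step :: "(nat \<Rightarrow> 'a::euclidean_space) \<Rightarrow> nat set \<Rightarrow> 'a \<Rightarrow> 'a set \<Rightarrow> 'a \<Rightarrow> 'a set \<Rightarrow> bool" where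
  "outer_step a I x Q x' Q' \<longleftrightarrow>
     (\<exists>i\<in>I. a i \<bullet> x < 0) \<and>
     (\<exists>m. most_violated a I (x /\<^sub>R norm x) m \<and>
          \<not> pos_spanning (insert (a m) Q) \<and>
          (\<exists>y. y \<in> affine hull {x, a m} \<and> (\<forall>z\<in>affine hull {x, a m}. norm y \<le> norm z) \<and>
               inner_loop (a m) Q y x' Q'))"

text \<open>A (partial) run of Algorithm 2.9 producing x^1,Q_1,...,x^K,Q_K.\<close>
definition alg_run :: "(nat \<Rightarrow> 'a::euclidean_space) \<Rightarrow> nat set \<Rightarrow> nat \<Rightarrow> (nat \<Rightarrow> 'a) \<Rightarrow> (nat \<Rightarrow> 'a set) \<Rightarrow> bool" where
  "alg_run a I K xs Qs \<longleftrightarrow> 1 \<le> K \<and>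
     (\<exists>j\<in>I. xs 1 = a j \<and> Qs 1 = {a j}) \<and>
     (\<forall>k. 1 \<le> k \<and> k < K \<longrightarrow> outer_step a I (xs k) (Qs k) (xs (Suc k)) (Qs (Suc k)))"

end

(* Every iterate x^k is the point of aff Q_k closest to the origin and lies in conv Q_k,
   so def Q_k = |x^k|.  As Q_k lies on the unit sphere, the centre of its touching sphere is
   this closest point, so the inner loop (4)-(6) only moves along segments towards points of
   smaller norm, starting from the closest point y to O on the line through x^k and a_m.
   Since a_m . x^k < 0 and |a_m| = 1, a computation in that line gives
   1/|y|^2 >= 1/|x^k|^2 + 1.  Starting from |x^1| = 1, this yields 1/|x^k|^2 >= k >= t^2. *)

theory Submission
  imports Defs
begin

lemma closest_point_affine_orthogonal:
  fixes A :: "'a::euclidean_space set"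
  assumes "affine A" "closed A" "z \<in> A"
  shows "(a - closest_point A a) \<bullet> (z - closest_point A a) = 0"
proof -
  let ?p = "closest_point A a"
  have "?p \<in> A" using assms closest_point_in_set by blast
  then have mirror: "2 *\<^sub>R ?p + (-1) *\<^sub>R z \<in> A" using assms by (intro mem_affine) auto
  have le: "(a - ?p) \<bullet> (z - ?p) \<le> 0"
    using assms by (intro closest_point_dot) (auto intro: affine_imp_convex)
  have "(a - ?p) \<bullet> ((2 *\<^sub>R ?p + (-1) *\<^sub>R z) - ?p) \<le> 0"
    using assms mirror by (intro closest_point_dot) (auto intro: affine_imp_convex)
  then have "(a - ?p) \<bullet> (z - ?p) \<ge> 0" by (simp add: algebra_simps inner_diff_right)
  with le show ?thesis by linarith
qed

lemma proj0_eq_closest_point: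
  fixes S :: "'a::euclidean_space set"
  assumes "S \<noteq> {}"
  shows "proj0 S = closest_point (affine hull S) 0"
  unfolding proj0_def
proof (rule the_equality)
  show "closest_point (affine hull S) 0 \<in> affine hull S \<and>
      (\<forall>z\<in>affine hull S. norm (closest_point (affine hull S) 0) \<le> norm z)"
    using closest_point_exists[of "affine hull S" 0] assms by (simp add: dist_norm)
next
  fix p :: 'a
  assume "p \<in> affine hull S \<and> (\<forall>z\<in>affine hull S. norm p \<le> norm z)"
  then show "p = closest_point (affine hull S) 0"
    by (intro closest_point_unique) (auto simp: dist_norm intro: affine_imp_convex)
qed

lemma proj0_in_affine_hull: "S \<noteq> {} \<Longrightarrow> proj0 S \<in> affine hull S"
  by (simp add: proj0_eq_closest_point closest_point_in_set)

lemma proj0_norm_le: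
  fixes S :: "'a::euclidean_space set"
  assumes "z \<in> affine hull S"
  shows "norm (proj0 S) \<le> norm z"
proof -
  have "S \<noteq> {}" using assms by auto
  then show ?thesis
    using assms closest_point_le[of "affine hull S" z 0]
    by (simp add: proj0_eq_closest_point dist_norm)
qed

lemma proj0_unique:
  fixes S :: "'a::euclidean_space set"
  assumes "p \<in> affine hull S" "\<forall>z\<in>affine hull S. norm p \<le> norm z"
  shows "proj0 S = p"
proof -
  have "S \<noteq> {}" using assms by auto
  then show ?thesis
    using assms closest_point_unique[of "affine hull S" p 0]
    by (simp add: proj0_eq_closest_point dist_norm affine_imp_convex)
qed

lemma proj0_inner:
  fixes S :: "'a::euclidean_space set"
  assumes "z \<in> affine hull S"
  shows "z \<bullet> proj0 S = proj0 S \<bullet> proj0 S"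
proof -
  have "S \<noteq> {}" using assms by auto
  then show ?thesis
    using assms closest_point_affine_orthogonal[of "affine hull S" z 0]
    by (simp add: proj0_eq_closest_point inner_diff_right inner_diff_left inner_commute)
qed

lemma affine_hull_equidistant_unique:
  fixes S :: "'a::euclidean_space set"
  assumes C: "C \<in> affine hull S" "\<forall>q\<in>S. dist q C = R"
    and D: "D \<in> affine hull S" "\<forall>q\<in>S. dist q D = R'"
  shows "C = D"
proof -
  define c where "c = (C \<bullet> C - D \<bullet> D - R\<^sup>2 + R'\<^sup>2) / 2"
  have "q \<bullet> (C - D) = c" if "q \<in> S" for q
  proof -
    have "R\<^sup>2 = q \<bullet> q - 2 * (q \<bullet> C) + C \<bullet> C" "R'\<^sup>2 = q \<bullet> q - 2 * (q \<bullet> D) + D \<bullet> D"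
      using C D that
      by (auto simp: dist_norm power2_norm_eq_inner inner_diff_left inner_diff_right inner_commute)
    then show ?thesis by (simp add: c_def inner_diff_right)
  qed
  then have "affine hull S \<subseteq> {x. (C - D) \<bullet> x = c}"
    by (intro hull_minimal affine_hyperplane) (auto simp: inner_commute)
  then have "(C - D) \<bullet> C = (C - D) \<bullet> D" using C D by auto
  then have "(C - D) \<bullet> (C - D) = 0" by (simp add: inner_diff_right)
  then show ?thesis by simp
qed

lemma tcenter_unique:
  fixes S :: "'a::euclidean_space set"
  assumes "C \<in> affine hull S" "\<forall>q\<in>S. dist q C = R"
  shows "tcenter S = C"
  unfolding tcenter_def
  using assms affine_hull_equidistant_unique[of C S R] by (intro the_equality) blast+

lemma tcenter_eq_proj0:
  fixes S :: "'a::euclidean_space set"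
  assumes "S \<noteq> {}" "S \<subseteq> sphere 0 r"
  shows "tcenter S = proj0 S"
proof (rule tcenter_unique)
  let ?p = "proj0 S"
  show "?p \<in> affine hull S" using assms(1) by (rule proj0_in_affine_hull)
  have "(dist q ?p)\<^sup>2 = r\<^sup>2 - ?p \<bullet> ?p" if "q \<in> S" for q
  proof -
    have "q \<bullet> q = r\<^sup>2" using assms(2) that by (auto simp: power2_norm_eq_inner[symmetric])
    moreover have "q \<bullet> ?p = ?p \<bullet> ?p" using that by (simp add: proj0_inner hull_inc)
    ultimately show ?thesis
      by (simp add: dist_norm power2_norm_eq_inner inner_diff_left inner_diff_right inner_commute)
  qed
  then show "\<forall>q\<in>S. dist q ?p = sqrt (r\<^sup>2 - ?p \<bullet> ?p)"
    by (metis zero_le_dist real_sqrt_unique)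
qed

lemma face_of_convex_hull_subset_delete:
  fixes S :: "'a::euclidean_space set"
  assumes "finite S" "F face_of convex hull S" "v \<notin> F"
  shows "F \<subseteq> convex hull (S - {v})"
proof -
  obtain S' where S': "S' \<subseteq> S" "F = convex hull S'"
    using face_of_convex_hull_subset[OF finite_imp_compact] assms(1,2) by blast
  have "S' \<subseteq> F" unfolding S'(2) by (rule hull_subset)
  with S'(1) assms(3) have "S' \<subseteq> S - {v}" by blast
  then show ?thesis unfolding S'(2) by (rule hull_mono)
qed

lemma inner_loop_result:
  fixes b :: "'a::euclidean_space"
  assumes "inner_loop b Q y x' Q'"
    and "b \<notin> Q" "finite Q" "insert b Q \<subseteq> sphere 0 r" "y \<in> convex hull (insert b Q)"
  shows "Q' \<subseteq> insert b Q \<and> x' = proj0 Q' \<and> x' \<in> convex hull Q' \<and> norm x' \<le> norm y"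
  using assms
proof induction
  case (accept Q y)
  have "tcenter (insert b Q) = proj0 (insert b Q)"
    using accept.prems(3) by (intro tcenter_eq_proj0) auto
  moreover have "norm (proj0 (insert b Q)) \<le> norm y"
    using accept.prems(4) convex_hull_subset_affine_hull by (intro proj0_norm_le) blast
  ultimately show ?case using accept.hyps by simp
next
  case (drop Q y' y F aj x' Q')
  let ?S = "insert b Q"
  have "tcenter ?S = proj0 ?S"
    using drop.prems(3) by (intro tcenter_eq_proj0) auto
  moreover have "norm (proj0 ?S) \<le> norm y"
    using drop.prems(4) convex_hull_subset_affine_hull by (intro proj0_norm_le) blast
  ultimately have "closed_segment y (tcenter ?S) \<subseteq> cball 0 (norm y)"
    by (intro closed_segment_subset) auto
  then have y'_y: "norm y' \<le> norm y" using drop.hyps(2) by auto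
  have "F \<subseteq> convex hull (?S - {aj})"
    using drop.hyps(4,7) drop.prems(2)
    by (intro face_of_convex_hull_subset_delete) (simp_all add: facet_of_def)
  moreover have "?S - {aj} = insert b (Q - {aj})" using drop.hyps(6) drop.prems(1) by blast
  ultimately have "y' \<in> convex hull (insert b (Q - {aj}))" using drop.hyps(5) by auto
  moreover have "b \<notin> Q - {aj}" "finite (Q - {aj})" "insert b (Q - {aj}) \<subseteq> sphere 0 r"
    using drop.prems(1-3) by auto
  ultimately have
    "Q' \<subseteq> insert b (Q - {aj}) \<and> x' = proj0 Q' \<and> x' \<in> convex hull Q' \<and> norm x' \<le> norm y'"
    using drop.IH by blast
  with y'_y show ?case by auto
qed

lemma proj0_line_obtuse:
  fixes x b :: "'a::euclidean_space"
  assumes "b \<bullet> b = 1" "x \<bullet> b \<le> 0"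
  defines "y \<equiv> proj0 {x, b}"
  shows "y \<in> closed_segment x b" and "(y \<bullet> y) * (x \<bullet> x + 1) \<le> x \<bullet> x"
proof -
  obtain u s where "y = u *\<^sub>R x + s *\<^sub>R b" "u + s = 1"
    using proj0_in_affine_hull[of "{x, b}"] unfolding y_def affine_hull_2 by auto
  then have y_eq: "y = (1 - s) *\<^sub>R x + s *\<^sub>R b" by (simp add: eq_diff_eq)
  define \<alpha> \<beta> N where "\<alpha> = x \<bullet> x" and "\<beta> = x \<bullet> b" and "N = y \<bullet> y"
  have "x \<bullet> y = N" "b \<bullet> y = N"
    unfolding y_def N_def by (simp_all add: proj0_inner hull_inc)
  then have N_x: "N = (1 - s) * \<alpha> + s * \<beta>" and N_b: "N = (1 - s) * \<beta> + s"
    using assms(1) by (simp_all add: y_eq \<alpha>_def \<beta>_def inner_add_right inner_commute)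
  have \<alpha>_ge: "\<alpha> \<ge> 0" and \<beta>_le: "\<beta> \<le> 0" using assms(2) by (simp_all add: \<alpha>_def \<beta>_def)
  have s_eq: "s * (1 - 2 * \<beta> + \<alpha>) = \<alpha> - \<beta>" using N_x N_b by (simp add: algebra_simps)
  have s_ge: "0 \<le> s"
    using s_eq \<alpha>_ge \<beta>_le by (smt (verit) mult_neg_pos)
  have s_le: "s \<le> 1"
    using s_eq \<alpha>_ge \<beta>_le by (smt (verit) mult_le_cancel_right1)
  show "y \<in> closed_segment x b"
    using s_ge s_le y_eq by (auto simp: closed_segment_def)
  have N_le_x: "N \<le> (1 - s) * \<alpha>" using N_x s_ge \<beta>_le by (simp add: mult_nonneg_nonpos)
  have "N \<le> s" using N_b s_le \<beta>_le by (simp add: mult_nonneg_nonpos)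
  then have "N * \<alpha> \<le> s * \<alpha>" using \<alpha>_ge by (rule mult_right_mono)
  with N_le_x show "(y \<bullet> y) * (x \<bullet> x + 1) \<le> x \<bullet> x"
    by (simp add: N_def[symmetric] \<alpha>_def[symmetric] algebra_simps)
qed

lemma most_violated_le:
  assumes "finite I" "most_violated a I (x /\<^sub>R norm x) m" "i \<in> I"
  shows "a m \<bullet> x \<le> a i \<bullet> x"
proof (cases "x = 0")
  case False
  have "a m \<bullet> (x /\<^sub>R norm x) \<le> a i \<bullet> (x /\<^sub>R norm x)"
    using assms unfolding most_violated_def by (metis Min_le finite_imageI image_eqI)
  with False show ?thesis by (simp add: divide_right_mono_neg divide_le_cancel)
qed simp

definition iterate_invariant :: "'a::euclidean_space \<Rightarrow> 'a set \<Rightarrow> bool" where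
  "iterate_invariant x Q \<longleftrightarrow> finite Q \<and> Q \<subseteq> sphere 0 1 \<and> x = proj0 Q \<and> x \<in> convex hull Q"

lemma outer_step_iterate:
  fixes a :: "nat \<Rightarrow> 'a::euclidean_space"
  assumes sphere: "\<forall>i\<in>I. a i \<in> sphere 0 1" and "finite I"
    and step: "outer_step a I x Q x' Q'" and inv: "iterate_invariant x Q"
  shows "iterate_invariant x' Q'" and "(x' \<bullet> x') * (x \<bullet> x + 1) \<le> x \<bullet> x"
proof -
  obtain i where i: "i \<in> I" "a i \<bullet> x < 0" using step by (auto simp: outer_step_def)
  obtain m y where mv: "most_violated a I (x /\<^sub>R norm x) m"
    and "y \<in> affine hull {x, a m}" "\<forall>z\<in>affine hull {x, a m}. norm y \<le> norm z"
    and loop: "inner_loop (a m) Q y x' Q'"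
    using step unfolding outer_step_def by blast
  then have y: "y = proj0 {x, a m}" by (simp add: proj0_unique)
  have "m \<in> I" using mv by (simp add: most_violated_def)
  then have b_sphere: "a m \<in> sphere 0 1" using sphere by blast
  have "a m \<bullet> x < 0" using most_violated_le[OF \<open>finite I\<close> mv i(1)] i(2) by simp
  then have "x \<bullet> a m \<le> 0" by (simp add: inner_commute)
  then have y_segment: "y \<in> closed_segment x (a m)"
    and y_bound: "(y \<bullet> y) * (x \<bullet> x + 1) \<le> x \<bullet> x"
    using proj0_line_obtuse[of "a m" x] b_sphere by (simp_all add: y norm_eq_1)
  have "q \<bullet> x \<ge> 0" if "q \<in> Q" for q
    using inv that by (simp add: iterate_invariant_def proj0_inner hull_inc)
  then have "a m \<notin> Q" using \<open>a m \<bullet> x < 0\<close> by force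
  moreover have "y \<in> convex hull (insert (a m) Q)"
    using inv y_segment hull_mono[of Q "insert (a m) Q"] hull_inc[of "a m" "insert (a m) Q"]
    by (auto simp: iterate_invariant_def intro: closed_segment_subset[THEN subsetD])
  ultimately have result:
    "Q' \<subseteq> insert (a m) Q \<and> x' = proj0 Q' \<and> x' \<in> convex hull Q' \<and> norm x' \<le> norm y"
    using inner_loop_result[OF loop] inv b_sphere by (auto simp: iterate_invariant_def)
  then show "iterate_invariant x' Q'"
    using inv b_sphere by (auto simp: iterate_invariant_def intro: finite_subset)
  have "x' \<bullet> x' \<le> y \<bullet> y"
    using result norm_ge_zero by (metis power2_norm_eq_inner power_mono)
  then show "(x' \<bullet> x') * (x \<bullet> x + 1) \<le> x \<bullet> x"
    using y_bound by (smt (verit) inner_ge_zero mult_right_mono)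
qed

(* 1/N >= 1/alpha + 1 and 1/alpha >= k give 1/N >= k + 1, with denominators cleared *)
lemma reciprocal_increment:
  fixes k \<alpha> N :: real
  assumes "0 \<le> k" "0 \<le> \<alpha>" "k * \<alpha> \<le> 1" "N * (\<alpha> + 1) \<le> \<alpha>"
  shows "(k + 1) * N \<le> 1"
proof -
  have "((k + 1) * N) * (\<alpha> + 1) \<le> (k + 1) * \<alpha>"
    using assms(1,4) by (simp add: mult.assoc mult_left_mono)
  also have "\<dots> \<le> 1 * (\<alpha> + 1)" using assms(3) by (simp add: algebra_simps)
  finally show ?thesis using assms(2) by (simp only: mult_le_cancel_right)
qed

lemma proj0_singleton: "proj0 {q} = (q::'a::euclidean_space)"
  by (rule proj0_unique) auto

lemma alg_run_iterate:
  fixes a :: "nat \<Rightarrow> 'a::euclidean_space"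
  assumes sphere: "\<forall>i\<in>I. a i \<in> sphere 0 1" and "finite I"
    and run: "alg_run a I K xs Qs" and "1 \<le> k" "k \<le> K"
  shows "iterate_invariant (xs k) (Qs k) \<and> real k * (xs k \<bullet> xs k) \<le> 1"
  using assms(4,5)
proof (induction k rule: dec_induct)
  case base
  obtain j where "j \<in> I" "xs 1 = a j" "Qs 1 = {a j}" using run by (auto simp: alg_run_def)
  with sphere show ?case
    by (auto simp: iterate_invariant_def proj0_singleton hull_inc norm_eq_1)
next
  case (step k)
  then have "outer_step a I (xs k) (Qs k) (xs (Suc k)) (Qs (Suc k))"
    using run by (simp add: alg_run_def)
  note outer = outer_step_iterate[OF sphere \<open>finite I\<close> this]
  have "iterate_invariant (xs k) (Qs k)" "real k * (xs k \<bullet> xs k) \<le> 1"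
    using step by auto
  moreover have "real (Suc k) * (xs (Suc k) \<bullet> xs (Suc k)) \<le> 1"
    using reciprocal_increment[OF _ _ calculation(2) outer(2)[OF calculation(1)]]
    by (simp add: add.commute)
  ultimately show ?case using outer(1) by blast
qed

theorem lemma2p11:
  fixes a :: "nat \<Rightarrow> 'a::euclidean_space" and n K :: nat
    and xs :: "nat \<Rightarrow> 'a" and Qs :: "nat \<Rightarrow> 'a set" and t :: real and k :: nat
  assumes "\<forall>i\<in>{1..n}. a i \<in> sphere 0 1"
    and "alg_run a {1..n} K xs Qs"
    and "t \<ge> 1" and "1 \<le> k" and "k \<le> K" and "real k \<ge> t\<^sup>2"
  shows "deficiency (Qs k) \<le> 1 / t"
proof -
  have "iterate_invariant (xs k) (Qs k)" and k_bound: "real k * (norm (xs k))\<^sup>2 \<le> 1"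
    using alg_run_iterate[OF assms(1) _ assms(2,4,5)] by (simp_all add: power2_norm_eq_inner)
  then have "deficiency (Qs k) = norm (xs k)"
    by (simp add: iterate_invariant_def deficiency_def)
  moreover have "(t * norm (xs k))\<^sup>2 \<le> 1"
    using mult_right_mono[OF assms(6), of "(norm (xs k))\<^sup>2"] k_bound
    by (simp add: power_mult_distrib)
  then have "t * norm (xs k) \<le> 1"
    using power2_le_imp_le[of "t * norm (xs k)" 1] by simp
  ultimately show ?thesis using assms(3) by (simp add: pos_le_divide_eq mult.commute)
qed

end
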